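(* Consider a reasonable rank-one construction with symbolic model $\Omega$. Fix $\varepsilon>0$ and an integer $\ell\ge1$. Then there exists $N(\varepsilon,\ell)$ such that for every integer $N\ge N(\varepsilon,\ell)$ and every $\omega\in\Omega$, the word $W=\omega_1\omega_2\cdots\omega_N$ can be written as $W=ABC$ with (possibly empty) words $A,B,C$ such that $B=1^s$ for some $s\ge0$, and there is a family of occurrences, at pairwise disjoint positions, of building blocks $B_n$ with $n\ge\ell$ inside $A$ and inside $C$, such that the total number of positions of $A$ and of $C$ not covered by these occurrences is at most $\varepsilon N$.
   Context: Rank-one parameters: integers $p_n\ge2$, integers $s_{n,i}\ge0$ ($0\le i\le p_n-1$), $h_1=1$, $h_{n+1}=p_nh_n+\sum_is_{n,i}$, $\sum_n\frac1{h_{n+1}}\sum_is_{n,i}<\infty$. Reasonable: $t_n:=\max_{0\le i\le p_n-1}s_{n,i}=o(h_n)$. Building blocks: $B_1=0$, $B_{n+1}=B_n1^{s_{n,0}}B_n1^{s_{n,1}}\cdots B_n1^{s_{n,p_n-1}}$ (words over $\{0,1\}$, $|B_n|=h_n$). $\Omega\subset\{0,1\}^{\mathbb Z}$ is the set of sequences all of whose finite subwords are subwords of some $B_m$. *)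

theory Defs
  imports Complex_Main "HOL-Library.Sublist"
begin

text \<open>Rank-one parameters: p n (n >= 1) is the number of copies, s n i the spacers.
  Letters are natural numbers 0 and 1. Index 0 is a dummy (B 0 = B 1 = [0]);
  the paper's indexing starts at 1.\<close>

fun block :: "(nat \<Rightarrow> nat) \<Rightarrow> (nat \<Rightarrow> nat \<Rightarrow> nat) \<Rightarrow> nat \<Rightarrow> nat list" where
  "block p s 0 = [0]"
| "block p s (Suc n) =
     (if n = 0 then [0]
      else concat (map (\<lambda>i. block p s n @ replicate (s n i) 1) [0..<p n]))"

definition height :: "(nat \<Rightarrow> nat) \<Rightarrow> (nat \<Rightarrow> nat \<Rightarrow> nat) \<Rightarrow> nat \<Rightarrow> nat" where
  "height p s n = length (block p s n)"

definition spacer_max :: "(nat \<Rightarrow> nat) \<Rightarrow> (nat \<Rightarrow> nat \<Rightarrow> nat) \<Rightarrow> nat \<Rightarrow> nat" where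
  "spacer_max p s n = Max {s n i | i. i < p n}"

definition rank_one_params :: "(nat \<Rightarrow> nat) \<Rightarrow> (nat \<Rightarrow> nat \<Rightarrow> nat) \<Rightarrow> bool" where
  "rank_one_params p s \<longleftrightarrow>
     (\<forall>n\<ge>1. p n \<ge> 2) \<and>
     summable (\<lambda>n. real (\<Sum>i<p (Suc n). s (Suc n) i) / real (height p s (Suc (Suc n))))"

definition reasonable :: "(nat \<Rightarrow> nat) \<Rightarrow> (nat \<Rightarrow> nat \<Rightarrow> nat) \<Rightarrow> bool" where
  "reasonable p s \<longleftrightarrow>
     (\<forall>e>0. \<exists>n0. \<forall>n\<ge>n0. real (spacer_max p s n) \<le> e * real (height p s n))"

definition symbolic_model :: "(nat \<Rightarrow> nat) \<Rightarrow> (nat \<Rightarrow> nat \<Rightarrow> nat) \<Rightarrow> (int \<Rightarrow> nat) set" where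
  "symbolic_model p s =
     {\<omega>. \<forall>a b. a \<le> b \<longrightarrow> (\<exists>m\<ge>1. sublist (map \<omega> [a..b]) (block p s m))}"

text \<open>A family Occ of occurrences (start position i, 0-based, and level n) of
  building blocks of level >= l in the word X, at pairwise disjoint positions.\<close>
definition block_occurrences ::
  "(nat \<Rightarrow> nat) \<Rightarrow> (nat \<Rightarrow> nat \<Rightarrow> nat) \<Rightarrow> nat \<Rightarrow> nat list \<Rightarrow> (nat \<times> nat) set \<Rightarrow> bool" where
  "block_occurrences p s l X Occ \<longleftrightarrow>
     (\<forall>(i, n)\<in>Occ. l \<le> n \<and> i + height p s n \<le> length X \<and>
                 take (height p s n) (drop i X) = block p s n) \<and>
     (\<forall>(i, n)\<in>Occ. \<forall>(j, m)\<in>Occ. (i, n) \<noteq> (j, m) \<longrightarrow>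
        {i..<i + height p s n} \<inter> {j..<j + height p s m} = {})"

definition uncovered ::
  "(nat \<Rightarrow> nat) \<Rightarrow> (nat \<Rightarrow> nat \<Rightarrow> nat) \<Rightarrow> nat list \<Rightarrow> (nat \<times> nat) set \<Rightarrow> nat" where
  "uncovered p s X Occ = card ({..<length X} - (\<Union>(i, n)\<in>Occ. {i..<i + height p s n}))"

end

theory Submission
  imports Defs
begin

text \<open>
  Fix \<open>\<delta> > 0\<close> and a level \<open>n\<close> beyond which every spacer is at most \<open>\<delta> h\<^sub>m\<close> and the
  spacer densities \<open>(\<Sum>\<^sub>i s\<^sub>m\<^sub>,\<^sub>i) / h\<^sub>m\<^sub>+\<^sub>1\<close>, \<open>m \<ge> n\<close>, add up to at most \<open>\<delta>\<close>; such an \<open>n\<close>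
  exists because the construction is reasonable and the densities are summable. Every
  block \<open>B\<^sub>m\<close> with \<open>m \<ge> n\<close> is then covered by copies of \<open>B\<^sub>n\<close> up to \<open>\<delta> h\<^sub>m\<close> positions.
  A word \<open>W\<close> of the symbolic model lies in some \<open>B\<^sub>m\<close>; at the level where it first meets
  two segments \<open>B\<^sub>k 1\<^sup>s\<close> it splits into a suffix of a segment, whole segments and a
  prefix of a segment. Inductively, a prefix \<open>P\<close> is covered up to \<open>2\<delta>|P| + h\<^sub>n\<close>
  positions and a suffix \<open>S\<close> up to \<open>4\<delta>|S| + h\<^sub>n\<close> positions apart from one final run
  of 1s. Removing that run leaves at most \<open>4\<delta>|W| + 2h\<^sub>n\<close> uncovered positions, which is
  at most \<open>\<epsilon>N\<close> for \<open>\<delta> = \<epsilon>/8\<close> and \<open>N \<ge> 4h\<^sub>n/\<epsilon>\<close>.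
\<close>

section \<open>Coverings by disjoint block occurrences\<close>

lemma atLeastLessThan_disjoint_iff:
  "{i..<i + a} \<inter> {j..<j + b} = {} \<longleftrightarrow> a = 0 \<or> b = 0 \<or> i + a \<le> j \<or> j + b \<le> i"
  for i j a b :: nat
proof
  assume "{i..<i + a} \<inter> {j..<j + b} = {}"
  then have "i \<notin> {j..<j + b}" "j \<notin> {i..<i + a}" if "a > 0" "b > 0"
    using that by auto
  then show "a = 0 \<or> b = 0 \<or> i + a \<le> j \<or> j + b \<le> i" by force
qed auto

lemma block_occurrences_append:
  assumes "block_occurrences p s l X OX" and "block_occurrences p s l Y OY"
  shows "block_occurrences p s l (X @ Y) (OX \<union> (\<lambda>(j, n). (j + length X, n)) ` OY)"
proof -
  let ?h = "height p s"
  have occ: "l \<le> n \<and> i + ?h n \<le> length Z \<and> take (?h n) (drop i Z) = block p s n"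
    if "block_occurrences p s l Z Oc" "(i, n) \<in> Oc" for Z Oc i n
    using that unfolding block_occurrences_def by blast
  have disj: "?h n = 0 \<or> ?h m = 0 \<or> i + ?h n \<le> j \<or> j + ?h m \<le> i"
    if "block_occurrences p s l Z Oc" "(i, n) \<in> Oc" "(j, m) \<in> Oc" "(i, n) \<noteq> (j, m)" for Z Oc i n j m
    using that unfolding block_occurrences_def atLeastLessThan_disjoint_iff by blast
  show ?thesis
    unfolding block_occurrences_def atLeastLessThan_disjoint_iff
    using occ[OF assms(1)] occ[OF assms(2)] disj[OF assms(1)] disj[OF assms(2)]
    by fastforce
qed

lemma uncovered_append_le:
  "uncovered p s (X @ Y) (OX \<union> (\<lambda>(j, n). (j + length X, n)) ` OY)
     \<le> uncovered p s X OX + uncovered p s Y OY"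
proof -
  let ?U = "\<lambda>Z Oc. {..<length Z} - (\<Union>(i, n)\<in>Oc. {i..<i + height p s n})"
  have "?U (X @ Y) (OX \<union> (\<lambda>(j, n). (j + length X, n)) ` OY)
      \<subseteq> ?U X OX \<union> (\<lambda>y. y + length X) ` ?U Y OY"
  proof
    fix x assume x: "x \<in> ?U (X @ Y) (OX \<union> (\<lambda>(j, n). (j + length X, n)) ` OY)"
    show "x \<in> ?U X OX \<union> (\<lambda>y. y + length X) ` ?U Y OY"
    proof (cases "x < length X")
      case False
      then have "x - length X \<in> ?U Y OY" and "x = x - length X + length X"
        using x by fastforce+
      then show ?thesis by blast
    qed (use x in auto)
  qed
  then have "uncovered p s (X @ Y) (OX \<union> (\<lambda>(j, n). (j + length X, n)) ` OY)
      \<le> card (?U X OX) + card ((\<lambda>y. y + length X) ` ?U Y OY)"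
    unfolding uncovered_def
    by (meson card_Un_le card_mono finite_Diff finite_Un finite_imageI finite_lessThan le_trans)
  also have "\<dots> \<le> uncovered p s X OX + uncovered p s Y OY"
    using card_image_le[of "?U Y OY" "\<lambda>y. y + length X"] unfolding uncovered_def by simp
  finally show ?thesis .
qed

definition coverable :: "(nat \<Rightarrow> nat) \<Rightarrow> (nat \<Rightarrow> nat \<Rightarrow> nat) \<Rightarrow> nat \<Rightarrow> nat list \<Rightarrow> real \<Rightarrow> bool" where
  "coverable p s l X b \<longleftrightarrow>
     (\<exists>Occ. block_occurrences p s l X Occ \<and> real (uncovered p s X Occ) \<le> b)"

lemma coverable_length: "coverable p s l X (length X)"
  unfolding coverable_def block_occurrences_def uncovered_def
  by (rule exI[of _ "{}"]) simp

lemma coverable_mono: "coverable p s l X a \<Longrightarrow> a \<le> b \<Longrightarrow> coverable p s l X b"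
  unfolding coverable_def by force

lemma coverable_Nil: "0 \<le> b \<Longrightarrow> coverable p s l [] b"
  using coverable_length[of p s l "[]"] by (auto intro: coverable_mono)

lemma coverable_replicate: "coverable p s l (replicate k a) k"
  using coverable_length[of p s l "replicate k a"] by simp

lemma coverable_block: "l \<le> k \<Longrightarrow> coverable p s l (block p s k) 0"
  unfolding coverable_def block_occurrences_def uncovered_def
  by (rule exI[of _ "{(0, k)}"]) (auto simp: height_def)

lemma coverable_append:
  assumes "coverable p s l X a" and "coverable p s l Y b"
  shows "coverable p s l (X @ Y) (a + b)"
proof -
  obtain OX OY where OX: "block_occurrences p s l X OX" "real (uncovered p s X OX) \<le> a"
    and OY: "block_occurrences p s l Y OY" "real (uncovered p s Y OY) \<le> b"
    using assms unfolding coverable_def by blast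
  have "real (uncovered p s (X @ Y) (OX \<union> (\<lambda>(j, n). (j + length X, n)) ` OY)) \<le> a + b"
    using uncovered_append_le[of p s X Y OX OY] OX(2) OY(2) by linarith
  with OX(1) OY(1) show ?thesis
    unfolding coverable_def by (blast intro: block_occurrences_append)
qed

lemma coverable_concat_upt:
  "(\<And>i. a \<le> i \<Longrightarrow> i < b \<Longrightarrow> coverable p s l (g i) (f i)) \<Longrightarrow>
     coverable p s l (concat (map g [a..<b])) (\<Sum>i=a..<b. f i)"
proof (induction b)
  case 0
  then show ?case by (simp add: coverable_Nil)
next
  case (Suc b)
  show ?case
  proof (cases "a \<le> b")
    case True
    then have "coverable p s l (concat (map g [a..<b]) @ g b) ((\<Sum>i=a..<b. f i) + f b)"
      using Suc by (intro coverable_append) auto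
    with True show ?thesis by (simp add: add.commute)
  qed (simp add: coverable_Nil)
qed

lemma length_concat_map_upt: "length (concat (map g [a..<b])) = (\<Sum>i=a..<b. length (g i))"
  by (simp add: length_concat interv_sum_list_conv_sum_set_nat)


section \<open>Prefixes, suffixes and subwords of concatenations\<close>

lemma sublist_replicateD: "sublist W (replicate k a) \<Longrightarrow> W = replicate (length W) a \<and> length W \<le> k"
proof -
  assume W: "sublist W (replicate k a)"
  have "set W \<subseteq> set (replicate k a)" by (rule set_mono_sublist[OF W])
  then have "\<forall>x\<in>set W. x = a" by (auto simp: set_replicate_conv_if split: if_splits)
  then have "replicate (length W) a = W" by (rule replicate_length_same)
  then show ?thesis using sublist_length_le[OF W] by simp
qed

lemma prefix_append_replicateD:
  assumes "prefix P (xs @ replicate k a)"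
  shows "prefix P xs \<or> (\<exists>j\<le>k. P = xs @ replicate j a)"
proof -
  from assms consider "prefix P xs" | us where "P = xs @ us" "prefix us (replicate k a)"
    unfolding prefix_append by blast
  then show ?thesis
  proof cases
    case 2
    then show ?thesis using sublist_replicateD[OF prefix_imp_sublist[OF 2(2)]] by metis
  qed simp
qed

lemma suffix_append_replicateD:
  assumes "suffix S (xs @ replicate k a)"
  shows "(\<exists>j\<le>k. S = replicate j a) \<or> (\<exists>S'. suffix S' xs \<and> S = S' @ replicate k a)"
proof -
  from assms consider "suffix S (replicate k a)" | S' where "S = S' @ replicate k a" "suffix S' xs"
    unfolding suffix_append by blast
  then show ?thesis
  proof cases
    case 1
    then show ?thesis using sublist_replicateD[OF suffix_imp_sublist[OF 1]] by metis
  qed blast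
qed

lemma sublist_append_replicateD:
  assumes "sublist W (xs @ replicate k a)"
  shows "sublist W xs \<or> (\<exists>W' j. suffix W' xs \<and> j \<le> k \<and> W = W' @ replicate j a)"
proof -
  from assms consider "sublist W xs" | "sublist W (replicate k a)"
    | W' us where "W = W' @ us" "suffix W' xs" "prefix us (replicate k a)"
    unfolding sublist_append by blast
  then show ?thesis
  proof cases
    case 2
    then have "suffix [] xs \<and> length W \<le> k \<and> W = [] @ replicate (length W) a"
      using sublist_replicateD[OF 2] by simp
    then show ?thesis by blast
  next
    case 3
    then show ?thesis using sublist_replicateD[OF prefix_imp_sublist[OF 3(3)]] by metis
  qed simp
qed

lemma prefix_concat_map_upt:
  "prefix P (concat (map g [0..<k])) \<Longrightarrow> 0 < k \<Longrightarrow>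
     \<exists>j<k. \<exists>P'. P = concat (map g [0..<j]) @ P' \<and> prefix P' (g j)"
proof (induction k arbitrary: P)
  case (Suc k)
  then have "prefix P (concat (map g [0..<k]) @ g k)" by simp
  then consider "prefix P (concat (map g [0..<k]))"
    | P' where "P = concat (map g [0..<k]) @ P'" "prefix P' (g k)"
    unfolding prefix_append by blast
  then show ?case
  proof cases
    case 1
    show ?thesis
    proof (cases "k = 0")
      case True
      with 1 show ?thesis by (intro exI[of _ 0] exI[of _ "[]"]) simp
    next
      case False
      with 1 Suc.IH obtain j P' where "j < k" "P = concat (map g [0..<j]) @ P'" "prefix P' (g j)"
        by blast
      then show ?thesis by (intro exI[of _ j] exI[of _ P']) simp
    qed
  next
    case 2
    then show ?thesis by (intro exI[of _ k] exI[of _ P']) simp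
  qed
qed simp

lemma suffix_concat_map_upt:
  "suffix S (concat (map g [0..<k])) \<Longrightarrow> 0 < k \<Longrightarrow>
     \<exists>j<k. \<exists>S'. S = S' @ concat (map g [Suc j..<k]) \<and> suffix S' (g j)"
proof (induction k arbitrary: S)
  case (Suc k)
  then have "suffix S (concat (map g [0..<k]) @ g k)" by simp
  then consider "suffix S (g k)"
    | S'' where "S = S'' @ g k" "suffix S'' (concat (map g [0..<k]))"
    unfolding suffix_append by blast
  then show ?case
  proof cases
    case 1
    then show ?thesis by (intro exI[of _ k] exI[of _ S]) simp
  next
    case 2
    show ?thesis
    proof (cases "k = 0")
      case True
      with 2 show ?thesis by (intro exI[of _ 0] exI[of _ "g 0"]) simp
    next
      case False
      with 2 Suc.IH obtain j S' where "j < k" "S'' = S' @ concat (map g [Suc j..<k])" "suffix S' (g j)"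
        by blast
      with 2 show ?thesis by (intro exI[of _ j] exI[of _ S']) simp
    qed
  qed
qed simp

lemma sublist_concat_map_upt:
  assumes "sublist W (concat (map g [0..<k]))" and "0 < k"
  shows "(\<exists>i<k. sublist W (g i)) \<or>
    (\<exists>a b S P. a < b \<and> b < k \<and> W = S @ concat (map g [Suc a..<b]) @ P \<and>
       suffix S (g a) \<and> prefix P (g b))"
proof -
  obtain Z where "prefix Z (concat (map g [0..<k]))" "suffix W Z"
    using assms(1) unfolding sublist_altdef by blast
  with prefix_concat_map_upt assms(2) obtain b P where
    b: "b < k" "Z = concat (map g [0..<b]) @ P" "prefix P (g b)" "suffix W (concat (map g [0..<b]) @ P)"
    by metis
  from b(4) consider "suffix W P" | S' where "W = S' @ P" "suffix S' (concat (map g [0..<b]))"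
    unfolding suffix_append by blast
  then show ?thesis
  proof cases
    case 1
    with b show ?thesis by (meson prefix_imp_sublist suffix_imp_sublist sublist_order.order.trans)
  next
    case 2
    show ?thesis
    proof (cases "b = 0")
      case True
      with 2 b show ?thesis by auto
    next
      case False
      with 2 suffix_concat_map_upt obtain a S where
        "a < b" "S' = S @ concat (map g [Suc a..<b])" "suffix S (g a)"
        by blast
      with 2 b show ?thesis by (intro disjI2 exI[of _ a] exI[of _ b] exI[of _ S] exI[of _ P]) auto
    qed
  qed
qed

section \<open>Building blocks\<close>

definition segment :: "(nat \<Rightarrow> nat) \<Rightarrow> (nat \<Rightarrow> nat \<Rightarrow> nat) \<Rightarrow> nat \<Rightarrow> nat \<Rightarrow> nat list" where
  "segment p s m i = block p s m @ replicate (s m i) 1"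

lemma block_Suc_segments:
  "1 \<le> m \<Longrightarrow> block p s (Suc m) = concat (map (segment p s m) [0..<p m])"
  unfolding block.simps(2)[of p s m] segment_def[abs_def] by simp

lemma height_Suc: "1 \<le> m \<Longrightarrow> height p s (Suc m) = p m * height p s m + (\<Sum>i<p m. s m i)"
  by (simp add: height_def block_Suc_segments length_concat_map_upt segment_def
      sum.distrib atLeast0LessThan)

lemma height_pos:
  assumes "\<forall>m\<ge>1. 0 < p m"
  shows "0 < height p s m"
proof (induction m rule: less_induct)
  case (less m)
  show ?case
  proof (cases "m \<le> 1")
    case False
    then obtain k where k: "m = Suc k" "1 \<le> k" by (cases m) auto
    then have "0 < p k * height p s k" using less assms by simp
    with k show ?thesis by (simp add: height_Suc)
  qed (auto simp: height_def le_Suc_eq)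
qed

lemma double_height_le_height_Suc:
  "2 \<le> p m \<Longrightarrow> 1 \<le> m \<Longrightarrow> 2 * height p s m \<le> height p s (Suc m)"
  by (simp add: height_Suc trans_le_add1)

lemma prefix_block_Suc:
  assumes "\<forall>m\<ge>1. 0 < p m"
  shows "prefix (block p s m) (block p s (Suc m))"
proof (cases "m = 0")
  case False
  then have "[0..<p m] = 0 # [1..<p m]" using assms by (simp add: upt_rec)
  with False show ?thesis by (simp add: block_Suc_segments segment_def)
qed simp

lemma prefix_block_mono:
  assumes "\<forall>m\<ge>1. 0 < p m" and "m \<le> k"
  shows "prefix (block p s m) (block p s k)"
  using assms(2)
proof (induction k rule: dec_induct)
  case (step k)
  from step.IH prefix_block_Suc[OF assms(1)] show ?case by (rule prefix_order.trans)
qed simp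

lemma symbolic_model_sublist_block:
  assumes "\<omega> \<in> symbolic_model p s"
  shows "\<exists>m\<ge>1. sublist (map \<omega> [a..b]) (block p s m)"
proof (cases "a \<le> b")
  case False
  then show ?thesis by auto
qed (use assms in \<open>auto simp: symbolic_model_def\<close>)

lemma spacer_le_spacer_max: "i < p m \<Longrightarrow> s m i \<le> spacer_max p s m"
  unfolding spacer_max_def Setcompr_eq_image by (rule Max_ge) auto

definition spacer_density :: "(nat \<Rightarrow> nat) \<Rightarrow> (nat \<Rightarrow> nat \<Rightarrow> nat) \<Rightarrow> nat \<Rightarrow> real" where
  "spacer_density p s m = real (\<Sum>i<p m. s m i) / real (height p s (Suc m))"

lemma summable_spacer_density: "rank_one_params p s \<Longrightarrow> summable (spacer_density p s)"
  unfolding rank_one_params_def spacer_density_def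
  by (subst summable_Suc_iff[symmetric]) simp

lemma summable_interval_sums_le:
  fixes f :: "nat \<Rightarrow> real"
  assumes "summable f" and "0 < e"
  shows "\<exists>N. \<forall>n\<ge>N. \<forall>m. (\<Sum>j=n..<m. f j) \<le> e"
proof -
  obtain N where N: "\<And>n m. N \<le> n \<Longrightarrow> norm (\<Sum>j=n..m. f j) < e"
    using summable_partial_sum_bound[OF assms] by blast
  have "(\<Sum>j=n..<m. f j) \<le> e" if "N \<le> n" for n m
  proof (cases m)
    case (Suc m')
    then have "{n..<m} = {n..m'}" by auto
    with N[OF that, of m'] show ?thesis by simp
  qed (simp add: less_imp_le[OF assms(2)])
  then show ?thesis by blast
qed

section \<open>Coverings beyond a fixed level\<close>

locale rank_one_tail =
  fixes p :: "nat \<Rightarrow> nat" and s :: "nat \<Rightarrow> nat \<Rightarrow> nat" and l n :: nat and \<delta> :: real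
  assumes one_le_level: "1 \<le> n" and min_level_le_level: "l \<le> n" and delta_pos: "0 < \<delta>"
    and two_le_copies: "\<forall>m\<ge>1. 2 \<le> p m"
    and spacer_le: "\<And>m i. n \<le> m \<Longrightarrow> i < p m \<Longrightarrow> real (s m i) \<le> \<delta> * real (height p s m)"
    and spacer_density_tail_le: "\<And>m. n \<le> m \<Longrightarrow> (\<Sum>j=n..<m. spacer_density p s j) \<le> \<delta>"
begin

lemma copies_pos: "\<forall>m\<ge>1. 0 < p m"
  using two_le_copies by fastforce

lemma double_height_le: "n \<le> m \<Longrightarrow> 2 * real (height p s m) \<le> real (height p s (Suc m))"
  using double_height_le_height_Suc[of p m s] two_le_copies one_le_level by simp

text \<open>Passing from level \<open>m\<close> to \<open>m + 1\<close> adds exactly the spacer density of level \<open>m\<close>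
  to the uncovered proportion.\<close>

lemma coverable_block_density:
  "n \<le> m \<Longrightarrow>
     coverable p s l (block p s m) ((\<Sum>j=n..<m. spacer_density p s j) * real (height p s m))"
proof (induction m rule: nat_induct_at_least)
  case base
  show ?case using coverable_block[OF min_level_le_level] by simp
next
  case (Suc m)
  let ?D = "\<Sum>j=n..<m. spacer_density p s j"
  let ?h = "real (height p s m)" and ?t = "real (\<Sum>i<p m. s m i)"
  have m: "1 \<le> m" using Suc.hyps one_le_level by simp
  have "coverable p s l (block p s (Suc m)) (\<Sum>i=0..<p m. ?D * ?h + real (s m i))"
    unfolding block_Suc_segments[OF m] segment_def
    by (intro coverable_concat_upt coverable_append Suc.IH coverable_replicate)
  moreover have "(\<Sum>i=0..<p m. ?D * ?h + real (s m i)) \<le>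
      (?D + spacer_density p s m) * real (height p s (Suc m))"
  proof -
    have "0 \<le> ?D * ?t"
      by (auto simp: spacer_density_def intro!: mult_nonneg_nonneg sum_nonneg divide_nonneg_nonneg)
    have "spacer_density p s m * real (height p s (Suc m)) = ?t"
      using height_pos[OF copies_pos, of s "Suc m"] by (simp add: spacer_density_def)
    then have "(?D + spacer_density p s m) * real (height p s (Suc m)) = ?D * (real (p m) * ?h + ?t) + ?t"
      by (simp add: distrib_right height_Suc[OF m])
    with \<open>0 \<le> ?D * ?t\<close> show ?thesis by (simp add: sum.distrib atLeast0LessThan algebra_simps)
  qed
  moreover have "(\<Sum>j=n..<Suc m. spacer_density p s j) = ?D + spacer_density p s m"
    using Suc.hyps by simp
  ultimately show ?case by (simp add: coverable_mono)
qed

lemma coverable_block_level: "n \<le> m \<Longrightarrow> coverable p s l (block p s m) (\<delta> * real (height p s m))"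
  using coverable_block_density spacer_density_tail_le
  by (blast intro: coverable_mono mult_right_mono of_nat_0_le_iff)

lemma coverable_block_ones:
  assumes "n \<le> m" and "real k \<le> \<delta> * real (height p s m)"
  shows "coverable p s l (block p s m @ replicate k 1)
    (2 * \<delta> * real (length (block p s m @ replicate k 1)))"
proof (rule coverable_mono)
  show "coverable p s l (block p s m @ replicate k 1) (\<delta> * real (height p s m) + real k)"
    by (intro coverable_append coverable_block_level[OF assms(1)] coverable_replicate)
  have "0 \<le> \<delta> * real k" using delta_pos by simp
  moreover have "real (length (block p s m @ replicate k 1)) = real (height p s m) + real k"
    by (simp add: height_def)
  ultimately show "\<delta> * real (height p s m) + real k \<le> 2 * \<delta> * real (length (block p s m @ replicate k 1))"
    using assms(2) by (simp add: algebra_simps)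
qed

lemma coverable_segments:
  assumes "n \<le> m" and "b \<le> p m"
  shows "coverable p s l (concat (map (segment p s m) [a..<b]))
    (2 * \<delta> * real (length (concat (map (segment p s m) [a..<b]))))"
proof -
  have "coverable p s l (concat (map (segment p s m) [a..<b]))
      (\<Sum>i=a..<b. 2 * \<delta> * real (length (segment p s m i)))"
  proof (intro coverable_concat_upt)
    fix i assume "i < b"
    with assms show "coverable p s l (segment p s m i) (2 * \<delta> * real (length (segment p s m i)))"
      unfolding segment_def by (intro coverable_block_ones spacer_le) simp_all
  qed
  then show ?thesis by (simp add: length_concat_map_upt sum_distrib_left)
qed

lemma coverable_prefix_block_ones:
  "n \<le> m \<Longrightarrow> real k \<le> \<delta> * real (height p s m) \<Longrightarrow> prefix P (block p s m @ replicate k 1) \<Longrightarrow>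
     coverable p s l P (2 * \<delta> * real (length P) + real (height p s n))"
proof (induction m arbitrary: k P rule: nat_induct_at_least)
  case base
  from prefix_append_replicateD[OF base(2)] show ?case
  proof (elim disjE exE conjE)
    assume "prefix P (block p s n)"
    then have "real (length P) \<le> real (height p s n)" by (simp add: height_def prefix_length_le)
    moreover have "0 \<le> \<delta> * real (length P)" using delta_pos by simp
    ultimately show ?thesis by (intro coverable_mono[OF coverable_length]) linarith
  next
    fix j assume "j \<le> k" "P = block p s n @ replicate j 1"
    with base coverable_block_ones[of n j] show ?thesis by (simp add: coverable_mono)
  qed
next
  case (Suc m)
  have m: "1 \<le> m" using Suc.hyps one_le_level by simp
  have copies: "0 < p m" using copies_pos m by simp
  from prefix_append_replicateD[OF Suc.prems(2)] show ?case
  proof (elim disjE exE conjE)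
    assume "prefix P (block p s (Suc m))"
    then have "prefix P (concat (map (segment p s m) [0..<p m]))"
      unfolding block_Suc_segments[OF m] .
    from prefix_concat_map_upt[OF this copies]
    obtain j P' where j: "j < p m" "P = concat (map (segment p s m) [0..<j]) @ P'"
      "prefix P' (segment p s m j)"
      by blast
    have "coverable p s l P' (2 * \<delta> * real (length P') + real (height p s n))"
      using Suc.IH[of "s m j" P'] j(3) spacer_le[OF Suc.hyps j(1)] by (simp add: segment_def)
    with coverable_segments[OF Suc.hyps, of j 0] j(1)
    have "coverable p s l P (2 * \<delta> * real (length (concat (map (segment p s m) [0..<j])))
        + (2 * \<delta> * real (length P') + real (height p s n)))"
      unfolding j(2) by (intro coverable_append) simp_all
    then show ?thesis by (simp add: j(2) algebra_simps)
  next
    fix j assume "j \<le> k" "P = block p s (Suc m) @ replicate j 1"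
    with Suc coverable_block_ones[of "Suc m" j] show ?thesis by (simp add: coverable_mono)
  qed
qed

text \<open>A suffix may end in a run of spacers that is long compared with the suffix itself,
  so that run is kept apart from the covered part.\<close>

definition coverable_then_ones :: "nat list \<Rightarrow> real \<Rightarrow> bool" where
  "coverable_then_ones S b \<longleftrightarrow> (\<exists>S0 q. S = S0 @ replicate q 1 \<and>
     coverable p s l S0 (4 * \<delta> * real (length S0) + real (height p s n)) \<and> real q \<le> b)"

lemma coverable_then_ones_replicate: "real q \<le> b \<Longrightarrow> coverable_then_ones (replicate q 1) b"
  unfolding coverable_then_ones_def by (rule exI[of _ "[]"]) (simp add: coverable_Nil)

lemma coverable_then_ones_append_segments:
  assumes "n \<le> m" and "j < p m" and "coverable_then_ones S (2 * \<delta> * real (height p s m))"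
    and "real k \<le> \<delta> * real (height p s (Suc m))"
  shows "coverable_then_ones (S @ concat (map (segment p s m) [Suc j..<p m]) @ replicate k 1)
    (2 * \<delta> * real (height p s (Suc m)))"
proof -
  define R where "R = concat (map (segment p s m) [Suc j..<p m])"
  obtain S0 q where S0: "S = S0 @ replicate q 1"
    "coverable p s l S0 (4 * \<delta> * real (length S0) + real (height p s n))"
    "real q \<le> 2 * \<delta> * real (height p s m)"
    using assms(3) unfolding coverable_then_ones_def by blast
  have double: "2 * \<delta> * real (height p s m) \<le> \<delta> * real (height p s (Suc m))"
    using double_height_le[OF assms(1)] delta_pos by simp
  show ?thesis
  proof (cases "Suc j = p m")
    case True
    \<comment> \<open>the spacers of the last segment join the final run of 1s\<close>
    then have "S @ R @ replicate k 1 = S0 @ replicate (q + k) 1"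
      using S0(1) by (simp add: R_def replicate_add)
    with S0 double assms(4) show ?thesis
      unfolding coverable_then_ones_def R_def by (intro exI[of _ S0] exI[of _ "q + k"]) simp
  next
    case False
    \<comment> \<open>a whole segment follows the run of 1s in \<open>S\<close> and pays for it\<close>
    with assms(2) have "R = segment p s m (Suc j) @ concat (map (segment p s m) [Suc (Suc j)..<p m])"
      unfolding R_def by (simp add: upt_conv_Cons)
    then have "real (height p s m) \<le> real (length R)" by (simp add: segment_def height_def)
    then have "\<delta> * real (height p s m) \<le> \<delta> * real (length R)"
      using delta_pos by (simp add: mult_left_mono)
    moreover have "0 \<le> \<delta> * real q" using delta_pos by simp
    ultimately have q: "real q + 2 * \<delta> * real (length R) \<le> 4 * \<delta> * real (q + length R)"
      using S0(3) by (simp add: algebra_simps)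
    have "coverable p s l (S0 @ replicate q 1 @ R)
        (4 * \<delta> * real (length S0) + real (height p s n) + (real q + 2 * \<delta> * real (length R)))"
      unfolding R_def
      by (intro coverable_append S0(2) coverable_replicate coverable_segments[OF assms(1)]) simp
    then have "coverable p s l (S0 @ replicate q 1 @ R)
        (4 * \<delta> * real (length (S0 @ replicate q 1 @ R)) + real (height p s n))"
      by (rule coverable_mono) (use q in \<open>simp add: algebra_simps\<close>)
    moreover have "S @ R @ replicate k 1 = (S0 @ replicate q 1 @ R) @ replicate k 1"
      using S0(1) by simp
    moreover have "real k \<le> 2 * \<delta> * real (height p s (Suc m))" using assms(4) delta_pos by simp
    ultimately show ?thesis unfolding coverable_then_ones_def R_def by blast
  qed
qed

lemma coverable_then_ones_suffix:
  "n \<le> m \<Longrightarrow> real k \<le> \<delta> * real (height p s m) \<Longrightarrow> suffix S (block p s m @ replicate k 1) \<Longrightarrow>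
     coverable_then_ones S (2 * \<delta> * real (height p s m))"
proof (induction m arbitrary: k S rule: nat_induct_at_least)
  case base
  have k: "real k \<le> 2 * \<delta> * real (height p s n)" using base delta_pos by simp
  from suffix_append_replicateD[OF base(2)] show ?case
  proof (elim disjE exE conjE)
    fix j assume "j \<le> k" and S: "S = replicate j 1"
    with k have "real j \<le> 2 * \<delta> * real (height p s n)"
      using of_nat_mono[of j k] by linarith
    then show ?thesis unfolding S by (rule coverable_then_ones_replicate)
  next
    fix S' assume S': "suffix S' (block p s n)" and S: "S = S' @ replicate k 1"
    have "real (length S') \<le> real (height p s n)" using S' by (simp add: height_def suffix_length_le)
    moreover have "0 \<le> \<delta> * real (length S')" using delta_pos by simp
    ultimately have "coverable p s l S' (4 * \<delta> * real (length S') + real (height p s n))"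
      by (intro coverable_mono[OF coverable_length]) linarith
    with S k show ?thesis unfolding coverable_then_ones_def by blast
  qed
next
  case (Suc m)
  have m: "1 \<le> m" using Suc.hyps one_le_level by simp
  have copies: "0 < p m" using copies_pos m by simp
  from suffix_append_replicateD[OF Suc.prems(2)] show ?case
  proof (elim disjE exE conjE)
    fix j assume "j \<le> k" and S: "S = replicate j 1"
    with Suc.prems(1) delta_pos have "real j \<le> 2 * \<delta> * real (height p s (Suc m))"
      using of_nat_mono[of j k] by linarith
    then show ?thesis unfolding S by (rule coverable_then_ones_replicate)
  next
    fix S'' assume S'': "suffix S'' (block p s (Suc m))" and S: "S = S'' @ replicate k 1"
    from S'' have "suffix S'' (concat (map (segment p s m) [0..<p m]))"
      unfolding block_Suc_segments[OF m] .
    from suffix_concat_map_upt[OF this copies]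
    obtain j S' where j: "j < p m" "S'' = S' @ concat (map (segment p s m) [Suc j..<p m])"
      "suffix S' (segment p s m j)"
      by blast
    have "coverable_then_ones S' (2 * \<delta> * real (height p s m))"
      using Suc.IH[of "s m j" S'] j(3) spacer_le[OF Suc.hyps j(1)] by (simp add: segment_def)
    with Suc.hyps j(1) Suc.prems(1) show ?thesis
      unfolding S j(2) using coverable_then_ones_append_segments by simp
  qed
qed

definition coverable_around_ones :: "nat list \<Rightarrow> real \<Rightarrow> bool" where
  "coverable_around_ones W b \<longleftrightarrow> (\<exists>A t C a c. W = A @ replicate t 1 @ C \<and>
     coverable p s l A a \<and> coverable p s l C c \<and> a + c \<le> b)"

lemma coverable_around_ones_suffix_block:
  assumes "n \<le> m" and "suffix W (block p s m)"
  shows "coverable_around_ones (W @ replicate j 1)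
    (4 * \<delta> * real (length (W @ replicate j 1)) + 2 * real (height p s n))"
proof -
  obtain S0 q where S0: "W = S0 @ replicate q 1"
    "coverable p s l S0 (4 * \<delta> * real (length S0) + real (height p s n))"
    using coverable_then_ones_suffix[of m 0 W] assms delta_pos
    unfolding coverable_then_ones_def by auto
  have "W @ replicate j 1 = S0 @ replicate (q + j) 1 @ []"
    using S0(1) by (simp add: replicate_add)
  moreover have "4 * \<delta> * real (length S0) + real (height p s n) + 0
      \<le> 4 * \<delta> * real (length (W @ replicate j 1)) + 2 * real (height p s n)"
    using S0(1) delta_pos by (simp add: algebra_simps)
  ultimately show ?thesis
    using S0(2) coverable_Nil unfolding coverable_around_ones_def by blast
qed

lemma coverable_around_ones_segments:
  assumes "n \<le> m" and "a < b" and "b < p m"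
    and "suffix S (segment p s m a)" and "prefix P (segment p s m b)"
  shows "coverable_around_ones (S @ concat (map (segment p s m) [Suc a..<b]) @ P)
    (4 * \<delta> * real (length (S @ concat (map (segment p s m) [Suc a..<b]) @ P)) + 2 * real (height p s n))"
proof -
  define R where "R = concat (map (segment p s m) [Suc a..<b])"
  obtain S0 q where S0: "S = S0 @ replicate q 1"
    "coverable p s l S0 (4 * \<delta> * real (length S0) + real (height p s n))"
    using coverable_then_ones_suffix[of m "s m a" S] assms spacer_le[OF assms(1), of a]
    unfolding coverable_then_ones_def segment_def by auto
  have "coverable p s l R (2 * \<delta> * real (length R))"
    unfolding R_def using assms by (intro coverable_segments) simp_all
  moreover have "coverable p s l P (2 * \<delta> * real (length P) + real (height p s n))"
    using coverable_prefix_block_ones[of m "s m b" P] assms spacer_le[OF assms(1,3)]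
    by (simp add: segment_def)
  ultimately have "coverable p s l (R @ P)
      (2 * \<delta> * real (length R) + (2 * \<delta> * real (length P) + real (height p s n)))"
    by (rule coverable_append)
  moreover have "S @ R @ P = S0 @ replicate q 1 @ (R @ P)" using S0(1) by simp
  moreover have "4 * \<delta> * real (length S0) + real (height p s n)
      + (2 * \<delta> * real (length R) + (2 * \<delta> * real (length P) + real (height p s n)))
      \<le> 4 * \<delta> * real (length (S @ R @ P)) + 2 * real (height p s n)"
    using S0(1) delta_pos by (simp add: algebra_simps)
  ultimately show ?thesis
    using S0(2) unfolding coverable_around_ones_def R_def by blast
qed

lemma coverable_around_ones_sublist:
  "n \<le> m \<Longrightarrow> real k \<le> \<delta> * real (height p s m) \<Longrightarrow> sublist W (block p s m @ replicate k 1) \<Longrightarrow>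
     coverable_around_ones W (4 * \<delta> * real (length W) + 2 * real (height p s n))"
proof (induction m arbitrary: k W rule: nat_induct_at_least)
  case base
  from sublist_append_replicateD[OF base(2)] show ?case
  proof (elim disjE exE conjE)
    assume "sublist W (block p s n)"
    then have "real (length W) \<le> real (height p s n)" by (simp add: height_def sublist_length_le)
    moreover have "0 \<le> \<delta> * real (length W)" using delta_pos by simp
    ultimately have "real (length W) + 0 \<le> 4 * \<delta> * real (length W) + 2 * real (height p s n)"
      by linarith
    moreover have "W = W @ replicate 0 1 @ []" by simp
    ultimately show ?thesis
      using coverable_length[of p s l W] coverable_Nil[of 0 p s l]
      unfolding coverable_around_ones_def by blast
  next
    fix W' j assume W': "suffix W' (block p s n)" and W: "W = W' @ replicate j 1"
    show ?thesis unfolding W using coverable_around_ones_suffix_block[OF _ W'] by simp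
  qed
next
  case (Suc m)
  have m: "1 \<le> m" using Suc.hyps one_le_level by simp
  have copies: "0 < p m" using copies_pos m by simp
  from sublist_append_replicateD[OF Suc.prems(2)] show ?case
  proof (elim disjE exE conjE)
    assume "sublist W (block p s (Suc m))"
    then have "sublist W (concat (map (segment p s m) [0..<p m]))"
      unfolding block_Suc_segments[OF m] .
    from sublist_concat_map_upt[OF this copies] show ?thesis
    proof (elim disjE exE conjE)
      fix i assume "i < p m" "sublist W (segment p s m i)"
      then show ?thesis
        using Suc.IH[of "s m i" W] spacer_le[OF Suc.hyps] by (simp add: segment_def)
    next
      fix a b S P
      assume "a < b" "b < p m" "W = S @ concat (map (segment p s m) [Suc a..<b]) @ P"
        "suffix S (segment p s m a)" "prefix P (segment p s m b)"
      then show ?thesis using coverable_around_ones_segments[OF Suc.hyps] by simp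
    qed
  next
    fix W' j assume W': "suffix W' (block p s (Suc m))" and W: "W = W' @ replicate j 1"
    show ?thesis unfolding W using coverable_around_ones_suffix_block[OF _ W'] Suc.hyps by simp
  qed
qed

lemma sublist_block_decomposition:
  assumes "sublist W (block p s m)"
  shows "\<exists>A t C OA OC. W = A @ replicate t 1 @ C \<and>
    block_occurrences p s l A OA \<and> block_occurrences p s l C OC \<and>
    real (uncovered p s A OA + uncovered p s C OC) \<le>
      4 * \<delta> * real (length W) + 2 * real (height p s n)"
proof -
  have "prefix (block p s m) (block p s (max m n))"
    using prefix_block_mono[OF copies_pos] by simp
  with assms have "sublist W (block p s (max m n))"
    by (blast intro: sublist_order.order.trans prefix_imp_sublist)
  then have "coverable_around_ones W (4 * \<delta> * real (length W) + 2 * real (height p s n))"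
    using coverable_around_ones_sublist[of "max m n" 0 W] delta_pos by simp
  then obtain A t C a c where "W = A @ replicate t 1 @ C"
    "coverable p s l A a" "coverable p s l C c" "a + c \<le> 4 * \<delta> * real (length W) + 2 * real (height p s n)"
    unfolding coverable_around_ones_def by blast
  moreover from this(2,3) obtain OA OC where
    "block_occurrences p s l A OA" "real (uncovered p s A OA) \<le> a"
    "block_occurrences p s l C OC" "real (uncovered p s C OC) \<le> c"
    unfolding coverable_def by blast
  ultimately show ?thesis by (intro exI[of _ A] exI[of _ t] exI[of _ C] exI[of _ OA] exI[of _ OC]) auto
qed

end

lemma rank_one_tail_exists:
  assumes "rank_one_params p s" and "reasonable p s" and "0 < \<delta>"
  shows "\<exists>n. rank_one_tail p s l n \<delta>"
proof -
  obtain n1 where n1: "\<And>m. n1 \<le> m \<Longrightarrow> real (spacer_max p s m) \<le> \<delta> * real (height p s m)"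
    using assms(2,3) unfolding reasonable_def by blast
  obtain n2 where n2: "\<And>n m. n2 \<le> n \<Longrightarrow> (\<Sum>j=n..<m. spacer_density p s j) \<le> \<delta>"
    using summable_interval_sums_le[OF summable_spacer_density[OF assms(1)] assms(3)] by blast
  have "rank_one_tail p s l (max (max n1 n2) (max l 1)) \<delta>"
  proof
    show "\<forall>m\<ge>1. 2 \<le> p m" using assms(1) unfolding rank_one_params_def by blast
    fix m i assume "max (max n1 n2) (max l 1) \<le> m" "i < p m"
    then have "s m i \<le> spacer_max p s m" and "n1 \<le> m"
      using spacer_le_spacer_max by simp_all
    with n1 show "real (s m i) \<le> \<delta> * real (height p s m)"
      by (meson of_nat_mono order.trans)
  qed (use assms(3) n2 in auto)
  then show ?thesis ..
qed

theorem mainTheorem7: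
  fixes p :: "nat \<Rightarrow> nat" and s :: "nat \<Rightarrow> nat \<Rightarrow> nat"
    and \<epsilon> :: real and l :: nat
  assumes "rank_one_params p s" and "reasonable p s"
    and "\<epsilon> > 0" and "l \<ge> 1"
  shows "\<exists>N0. \<forall>N\<ge>N0. \<forall>\<omega>\<in>symbolic_model p s.
           \<exists>A Bw C OA OC t. map \<omega> [1..int N] = A @ Bw @ C \<and> Bw = replicate t 1 \<and>
             block_occurrences p s l A OA \<and> block_occurrences p s l C OC \<and>
             real (uncovered p s A OA + uncovered p s C OC) \<le> \<epsilon> * real N"
proof -
  obtain n where tail: "rank_one_tail p s l n (\<epsilon> / 8)"
    using rank_one_tail_exists assms(1-3) by (metis divide_pos_pos zero_less_numeral)
  obtain N0 :: nat where N0: "4 * real (height p s n) \<le> \<epsilon> * real N0"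
    using real_arch_simple[of "4 * real (height p s n) / \<epsilon>"] assms(3)
    by (auto simp: pos_divide_le_eq mult.commute)
  show ?thesis
  proof (intro exI[of _ N0] allI impI ballI)
    fix N \<omega> assume "N0 \<le> N" and "\<omega> \<in> symbolic_model p s"
    then obtain m where "sublist (map \<omega> [1..int N]) (block p s m)"
      using symbolic_model_sublist_block by blast
    from rank_one_tail.sublist_block_decomposition[OF tail this]
    obtain A t C OA OC where decomposition: "map \<omega> [1..int N] = A @ replicate t 1 @ C"
      "block_occurrences p s l A OA" "block_occurrences p s l C OC"
      and "real (uncovered p s A OA + uncovered p s C OC)
        \<le> 4 * (\<epsilon> / 8) * real N + 2 * real (height p s n)"
      by auto
    moreover have "\<epsilon> * real N0 \<le> \<epsilon> * real N" using \<open>N0 \<le> N\<close> assms(3) by simp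
    ultimately have "real (uncovered p s A OA + uncovered p s C OC) \<le> \<epsilon> * real N"
      using N0 by linarith
    with decomposition show "\<exists>A Bw C OA OC t. map \<omega> [1..int N] = A @ Bw @ C \<and> Bw = replicate t 1 \<and>
        block_occurrences p s l A OA \<and> block_occurrences p s l C OC \<and>
        real (uncovered p s A OA + uncovered p s C OC) \<le> \<epsilon> * real N"
      by blast
  qed
qed

end
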